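(* Let $p$ be an admissible linear order on $\mathcal A$ and $I\subset\mathcal A$ an interval with respect to $p$. Let $\mathcal A^*$ be the amalgamation of $\mathcal A$ obtained by shrinking $I$ to a single new letter $z$, declared to belong to $L_e$ and placed in the position of $I$ in the order (all other letters and their order unchanged), and for $w\in\mathcal A^n$ let $w^*\in(\mathcal A^* )^n$ be obtained by replacing every letter of $w$ lying in $I$ by $z$. Then for every $w\in\mathcal A^n$ and every $k\ge1$, $$\sum_{i=1}^k\lambda_i(\phi_p(w))\le\sum_{i=1}^k\lambda_i(\phi_p^*(w^* )),$$ where $\phi_p^*$ is the generalised RSK shape map for the alphabet $\mathcal A^*$ with the induced order and $\lambda_i(\cdot)$ denotes the length of the $i$-th row. In particular, if $\mathcal P^*$ denotes the parameters of $\mathcal A^*$ (with $z$ having mass $\mu_1(I)$), then $\sum_{i=1}^k\lambda_i^{\mathcal P}(n)\le\sum_{i=1}^k\lambda_i^{\mathcal P^*}(n)$ pointwise on $(\mathcal A^n,\mu_n)$.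
   Context: Alphabet: $\mathcal A=L_e\sqcup L_o\sqcup G$ where $L_e=\{x_1,x_2,\dots\}$, $L_o=\{y_1,y_2,\dots\}$ are discrete and $G$ is identified with an interval of $\mathbb R$; $\mu_1$, $\mu_n=\mu_1^{\otimes n}$ are the measures with $\mu_1(\{x_i\})=\alpha_i$, $\mu_1(\{y_j\})=\beta_j$, and $\gamma$ times normalized Lebesgue measure on $G$, for Thoma parameters $\mathcal P$. An admissible order is a linear order $p$ on $\mathcal A$ for which $G$ is an interval (if $a_1<a<a_2$ with $a_1,a_2\in G$ then $a\in G$) and whose restriction to $G$ is the usual order of reals or its reverse. A subset $I\subset\mathcal A$ is an interval w.r.t. $p$ if $a_1,a_2\in I$, $a_1<a<a_2$ imply $a\in I$. Generalised RSK (row insertion) w.r.t. $p$: an $\mathcal A_p$-tableau is a Young diagram filled with letters of $\mathcal A$. To insert a letter $x$ into a tableau $T$: in the first row, if $x\in L_e$ find the leftmost entry strictly greater than $x$; if $x\in L_o\cup G$ find the leftmost entry greater than or equal to $x$; if there is none, append $x$ at the end of the row and stop; otherwise $x$ replaces that entry and the replaced entry is inserted into the second row by the same rule, and so on (an entry bumped out of the last row forms a new row). For $w=z_1\cdots z_n$, $R(w)$ is obtained by inserting $z_1,z_2,\dots,z_n$ successively into the empty tableau, and $\phi_p(w)\in\mathbb Y_n$ is the shape of $R(w)$. $\lambda_i^{\mathcal P}(n)(w):=\lambda_i(\phi_p(w))$. *)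

theory Defs
  imports Complex_Main
begin

(* Letters: L_e = {X i}, L_o = {Y j}, G = {Gl r | r in Gset} with Gset an interval of reals *)
datatype letter = X nat | Y nat | Gl real

fun is_X :: "letter \<Rightarrow> bool" where
  "is_X (X _) = True"
| "is_X _ = False"

definition real_interval :: "real set \<Rightarrow> bool" where
  "real_interval S \<longleftrightarrow> (\<forall>a b c. a \<in> S \<longrightarrow> c \<in> S \<longrightarrow> a \<le> b \<longrightarrow> b \<le> c \<longrightarrow> b \<in> S)"

definition alph :: "real set \<Rightarrow> letter set" where
  "alph Gset = range X \<union> range Y \<union> Gl ` Gset"

definition admissible :: "real set \<Rightarrow> letter rel \<Rightarrow> bool" where
  "admissible Gset p \<longleftrightarrow>
     linear_order_on (alph Gset) p \<and>
     (\<forall>a1 a a2. a1 \<in> Gl ` Gset \<longrightarrow> a2 \<in> Gl ` Gset \<longrightarrow> a \<in> alph Gset \<longrightarrow>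
        (a1, a) \<in> p \<longrightarrow> (a, a2) \<in> p \<longrightarrow> a \<in> Gl ` Gset) \<and>
     ((\<forall>r\<in>Gset. \<forall>s\<in>Gset. (Gl r, Gl s) \<in> p \<longleftrightarrow> r \<le> s) \<or>
      (\<forall>r\<in>Gset. \<forall>s\<in>Gset. (Gl r, Gl s) \<in> p \<longleftrightarrow> s \<le> r))"

definition interval_wrt :: "'a set \<Rightarrow> 'a rel \<Rightarrow> 'a set \<Rightarrow> bool" where
  "interval_wrt A p I \<longleftrightarrow> I \<subseteq> A \<and>
     (\<forall>a1 a a2. a1 \<in> I \<longrightarrow> a2 \<in> I \<longrightarrow> a \<in> A \<longrightarrow> (a1, a) \<in> p \<longrightarrow> (a, a2) \<in> p \<longrightarrow> a \<in> I)"

(* Generalised RSK. strict x: x belongs to L_e (bumps the leftmost strictly greater entry);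
   otherwise x bumps the leftmost entry greater than or equal to x. *)
definition bump_of :: "'a rel \<Rightarrow> ('a \<Rightarrow> bool) \<Rightarrow> 'a \<Rightarrow> 'a \<Rightarrow> bool" where
  "bump_of p strict x e = (if strict x then (x, e) \<in> p \<and> x \<noteq> e else (x, e) \<in> p)"

fun row_ins :: "('a \<Rightarrow> 'a \<Rightarrow> bool) \<Rightarrow> 'a \<Rightarrow> 'a list \<Rightarrow> 'a option \<times> 'a list" where
  "row_ins bump x [] = (None, [x])"
| "row_ins bump x (e # es) =
     (if bump x e then (Some e, x # es)
      else (let (r, es') = row_ins bump x es in (r, e # es')))"

(* tableau = list of rows, first row first *)
fun tab_ins :: "('a \<Rightarrow> 'a \<Rightarrow> bool) \<Rightarrow> 'a \<Rightarrow> 'a list list \<Rightarrow> 'a list list" where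
  "tab_ins bump x [] = [[x]]"
| "tab_ins bump x (r # rs) =
     (case row_ins bump x r of
        (None, r') \<Rightarrow> r' # rs
      | (Some y, r') \<Rightarrow> r' # tab_ins bump y rs)"

definition rsk :: "('a \<Rightarrow> 'a \<Rightarrow> bool) \<Rightarrow> 'a list \<Rightarrow> 'a list list" where
  "rsk bump w = fold (tab_ins bump) w []"

definition phi :: "'a rel \<Rightarrow> ('a \<Rightarrow> bool) \<Rightarrow> 'a list \<Rightarrow> nat list" where
  "phi p strict w = map length (rsk (bump_of p strict) w)"

(* lambda_i, 1-indexed, 0 beyond the number of rows *)
definition lam :: "nat list \<Rightarrow> nat \<Rightarrow> nat" where
  "lam sh i = (if 1 \<le> i \<and> i \<le> length sh then sh ! (i - 1) else 0)"

(* Amalgamated alphabet: None is the new letter z, Some a for a in A - I *)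
definition amalg_alph :: "letter set \<Rightarrow> letter set \<Rightarrow> letter option set" where
  "amalg_alph A I = Some ` (A - I) \<union> {None}"

definition amalg_order :: "letter set \<Rightarrow> letter rel \<Rightarrow> letter set \<Rightarrow> letter option rel" where
  "amalg_order A p I =
     {(Some a, Some b) | a b. a \<in> A - I \<and> b \<in> A - I \<and> (a, b) \<in> p}
   \<union> {(None, None)}
   \<union> {(None, Some b) | b. b \<in> A - I \<and> (\<exists>a\<in>I. (a, b) \<in> p)}
   \<union> {(Some a, None) | a. a \<in> A - I \<and> (\<exists>b\<in>I. (a, b) \<in> p)}"

(* z is declared to belong to L_e *)
fun amalg_strict :: "letter option \<Rightarrow> bool" where
  "amalg_strict None = True"
| "amalg_strict (Some a) = is_X a"

definition amalg_word :: "letter set \<Rightarrow> letter list \<Rightarrow> letter option list" where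
  "amalg_word I w = map (\<lambda>a. if a \<in> I then None else Some a) w"

end

theory Submission
  imports Defs
begin

(* The row sums lambda_1 + ... + lambda_k of the generalised RSK shape are
   characterised through Greene's theorem: call a k-colouring of a word a choice of at most k
   disjoint subsequences, each of which could form part of a row (weakly increasing, a letter of
   L_o or G never repeated); then lambda_1 + ... + lambda_k is the largest number of letters
   covered by a k-colouring.  Amalgamation only makes more pairs of positions "weakly
   increasing" (two letters of I become two copies of the strict letter z), so every
   k-colouring of w is one of w*, whence the inequality. *)

(* Letters are standardised to natural numbers; s marks the letters of L_e ("strict" letters).
   slt s x y: x bumps y during row insertion.  sle s x y: x may precede y in a row. *)
definition slt :: "(nat \<Rightarrow> bool) \<Rightarrow> nat \<Rightarrow> nat \<Rightarrow> bool" where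
  "slt s x y \<longleftrightarrow> x < y \<or> (x = y \<and> \<not> s x)"

definition sle :: "(nat \<Rightarrow> bool) \<Rightarrow> nat \<Rightarrow> nat \<Rightarrow> bool" where
  "sle s x y \<longleftrightarrow> x < y \<or> (x = y \<and> s x)"

lemma not_slt: "\<not> slt s x y \<longleftrightarrow> sle s y x"
  unfolding slt_def sle_def by auto

lemma not_sle: "\<not> sle s x y \<longleftrightarrow> slt s y x"
  unfolding slt_def sle_def by auto

lemma slt_trans: "slt s a b \<Longrightarrow> slt s b c \<Longrightarrow> slt s a c"
  unfolding slt_def by auto

lemma sle_trans: "sle s a b \<Longrightarrow> sle s b c \<Longrightarrow> sle s a c"
  unfolding sle_def by auto

lemma slt_sle_trans: "slt s a b \<Longrightarrow> sle s b c \<Longrightarrow> slt s a c"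
  unfolding slt_def sle_def by auto

lemma sle_slt_trans: "sle s a b \<Longrightarrow> slt s b c \<Longrightarrow> slt s a c"
  unfolding slt_def sle_def by auto

lemma slt_sle_weaken: "slt s a b \<Longrightarrow> sle s b c \<Longrightarrow> sle s a c"
  unfolding slt_def sle_def by auto

lemma sle_slt_weaken: "sle s a b \<Longrightarrow> slt s b c \<Longrightarrow> sle s a c"
  unfolding slt_def sle_def by auto

(* A coloured word is a list of pairs (letter, colour); None means uncoloured.  The maximum of ncol over
   k-colourings is the quantity in Greene's theorem. *)
definition compatible :: "(nat \<Rightarrow> bool) \<Rightarrow> nat \<times> nat option \<Rightarrow> nat \<times> nat option \<Rightarrow> bool" where
  "compatible s p q \<longleftrightarrow> (snd p = snd q \<and> snd p \<noteq> None \<longrightarrow> sle s (fst p) (fst q))"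

definition colouring :: "(nat \<Rightarrow> bool) \<Rightarrow> nat \<Rightarrow> (nat \<times> nat option) list \<Rightarrow> bool" where
  "colouring s k ps \<longleftrightarrow>
     (\<forall>p\<in>set ps. \<forall>m. snd p = Some m \<longrightarrow> m < k) \<and> sorted_wrt (compatible s) ps"

definition ncol :: "(nat \<times> nat option) list \<Rightarrow> nat" where
  "ncol ps = length (filter (\<lambda>p. snd p \<noteq> None) ps)"

lemma ncol_append [simp]: "ncol (xs @ ys) = ncol xs + ncol ys"
  by (simp add: ncol_def)

lemma ncol_Cons [simp]: "ncol (p # ys) = (if snd p = None then 0 else 1) + ncol ys"
  by (simp add: ncol_def)

lemma ncol_Nil [simp]: "ncol [] = 0"
  by (simp add: ncol_def)

lemma ncol_eq_snd: "map snd ps = map snd qs \<Longrightarrow> ncol ps = ncol qs"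
proof -
  have "ncol xs = length (filter (\<lambda>c. c \<noteq> None) (map snd xs))" for xs :: "(nat \<times> nat option) list"
    by (simp add: ncol_def filter_map comp_def)
  then show "map snd ps = map snd qs \<Longrightarrow> ncol ps = ncol qs" by metis
qed

definition recolourable :: "(nat \<Rightarrow> bool) \<Rightarrow> nat list \<Rightarrow> nat list \<Rightarrow> bool" where
  "recolourable s u u' \<longleftrightarrow> (\<forall>a b k ps. map fst ps = a @ u @ b \<longrightarrow> colouring s k ps \<longrightarrow>
      (\<exists>ps'. map fst ps' = a @ u' @ b \<and> colouring s k ps' \<and> ncol ps' = ncol ps))"

definition knuth_equiv :: "(nat \<Rightarrow> bool) \<Rightarrow> nat list \<Rightarrow> nat list \<Rightarrow> bool" where
  "knuth_equiv s u u' \<longleftrightarrow> recolourable s u u' \<and> recolourable s u' u"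

lemma recolourable_trans:
  "recolourable s u v \<Longrightarrow> recolourable s v w \<Longrightarrow> recolourable s u w"
  unfolding recolourable_def by metis

lemma recolourable_context:
  "recolourable s u v \<Longrightarrow> recolourable s (c @ u @ d) (c @ v @ d)"
  unfolding recolourable_def by (metis append.assoc)

lemma knuth_equiv_refl: "knuth_equiv s u u"
  unfolding knuth_equiv_def recolourable_def by blast

lemma knuth_equiv_sym: "knuth_equiv s u v \<Longrightarrow> knuth_equiv s v u"
  unfolding knuth_equiv_def by blast

lemma knuth_equiv_trans: "knuth_equiv s u v \<Longrightarrow> knuth_equiv s v w \<Longrightarrow> knuth_equiv s u w"
  unfolding knuth_equiv_def using recolourable_trans by blast

lemma knuth_equiv_context:
  "knuth_equiv s u v \<Longrightarrow> knuth_equiv s (c @ u @ d) (c @ v @ d)"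
  unfolding knuth_equiv_def using recolourable_context by blast

lemma knuth_equiv_prefix: "knuth_equiv s u v \<Longrightarrow> knuth_equiv s (c @ u) (c @ v)"
  using knuth_equiv_context[of s u v c "[]"] by simp

lemma knuth_equiv_suffix: "knuth_equiv s u v \<Longrightarrow> knuth_equiv s (u @ d) (v @ d)"
  using knuth_equiv_context[of s u v "[]" d] by simp

lemma knuth_equiv_recolour:
  assumes "knuth_equiv s u v" "map fst ps = u" "colouring s k ps"
  obtains ps' where "map fst ps' = v" "colouring s k ps'" "ncol ps' = ncol ps"
  using assms unfolding knuth_equiv_def recolourable_def by (metis append_Nil append_Nil2)

lemma recolourable_triple_intro:
  assumes "\<And>pa pb c1 c2 c3 k. colouring s k (pa @ [(a1,c1),(a2,c2),(a3,c3)] @ pb) \<Longrightarrow>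
     \<exists>ps'. map fst ps' = map fst pa @ [b1,b2,b3] @ map fst pb \<and> colouring s k ps' \<and>
       ncol ps' = ncol (pa @ [(a1,c1),(a2,c2),(a3,c3)] @ pb)"
  shows "recolourable s [a1,a2,a3] [b1,b2,b3]"
  unfolding recolourable_def
proof (intro allI impI)
  fix a b k ps assume m: "map fst ps = a @ [a1,a2,a3] @ b" and c: "colouring s k ps"
  from m obtain pa r where "ps = pa @ r" "map fst pa = a" "map fst r = [a1,a2,a3] @ b"
    by (auto simp: map_eq_append_conv)
  moreover from \<open>map fst r = [a1,a2,a3] @ b\<close> obtain c1 c2 c3 pb
    where "r = [(a1,c1),(a2,c2),(a3,c3)] @ pb" "map fst pb = b"
    by (auto simp: map_eq_Cons_conv)
  ultimately have ps: "ps = pa @ [(a1,c1),(a2,c2),(a3,c3)] @ pb" "map fst pa = a" "map fst pb = b"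
    by simp_all
  from assms[OF c[unfolded ps(1)]]
  show "\<exists>ps'. map fst ps' = a @ [b1,b2,b3] @ b \<and> colouring s k ps' \<and> ncol ps' = ncol ps"
    unfolding ps .
qed

lemma colouring_swap:
  assumes "colouring s k (pa @ [p,q] @ pb)" "compatible s q p"
  shows "colouring s k (pa @ [q,p] @ pb)"
  using assms unfolding colouring_def by (auto simp: sorted_wrt_append)

lemma colouring_triple:
  "colouring s k (pa @ [q1,q2,q3] @ pb) \<longleftrightarrow>
   (\<forall>p\<in>set pa \<union> set pb \<union> {q1,q2,q3}. \<forall>m. snd p = Some m \<longrightarrow> m < k) \<and>
   sorted_wrt (compatible s) pa \<and> sorted_wrt (compatible s) pb \<and>
   compatible s q1 q2 \<and> compatible s q1 q3 \<and> compatible s q2 q3 \<and>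
   (\<forall>p\<in>set pa. compatible s p q1 \<and> compatible s p q2 \<and> compatible s p q3 \<and>
      (\<forall>q\<in>set pb. compatible s p q)) \<and>
   (\<forall>q\<in>set pb. compatible s q1 q \<and> compatible s q2 q \<and> compatible s q3 q)"
  unfolding colouring_def by (auto simp: sorted_wrt_append)

(* Exchanging two colour names in a tail of a colouring: used when two colour classes
   trade their parts after a Knuth move. *)
definition swap_colour :: "nat \<Rightarrow> nat \<Rightarrow> nat option \<Rightarrow> nat option" where
  "swap_colour m m' c = (if c = Some m then Some m' else if c = Some m' then Some m else c)"

lemma ncol_swap_colour [simp]: "ncol (map (apsnd (swap_colour m m')) ps) = ncol ps"
  by (induction ps) (auto simp: swap_colour_def)

lemma map_fst_swap_colour [simp]: "map fst (map (apsnd (swap_colour m m')) ps) = map fst ps"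
  by (induction ps) auto

lemma compatible_swap_colour:
  assumes "compatible s p q"
    and "snd p = Some m' \<Longrightarrow> snd q = Some m \<Longrightarrow> sle s (fst p) (fst q)"
    and "snd p = Some m \<Longrightarrow> snd q = Some m' \<Longrightarrow> sle s (fst p) (fst q)"
  shows "compatible s p (apsnd (swap_colour m m') q)"
  using assms by (cases q) (auto simp: compatible_def swap_colour_def)

lemma colouring_swap_colour:
  assumes "colouring s k ps" "m < k" "m' < k"
  shows "colouring s k (map (apsnd (swap_colour m m')) ps)"
proof -
  have inj: "\<And>c d. (swap_colour m m' c = swap_colour m m' d) = (c = d)"
     and none: "\<And>c. (swap_colour m m' c = None) = (c = None)"
    by (auto simp: swap_colour_def)
  have "\<And>p q. compatible s (apsnd (swap_colour m m') p) (apsnd (swap_colour m m') q)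
                 = compatible s p q"
    by (simp add: compatible_def inj none)
  then show ?thesis using assms unfolding colouring_def sorted_wrt_map
    by (auto simp: swap_colour_def split: if_splits)
qed

(* The Knuth relation (A): y z x ~ y x z for x < y <= z, in both directions.  From y z x to y x z
   the colours of z and x necessarily differ, so the two letters can be exchanged. *)
lemma recolour_A_forward:
  assumes xy: "slt s x y" and yz: "sle s y z"
  shows "recolourable s [y,z,x] [y,x,z]"
proof (rule recolourable_triple_intro)
  fix pa pb c1 c2 c3 k
  assume c: "colouring s k (pa @ [(y,c1),(z,c2),(x,c3)] @ pb)"
  have "\<not> sle s z x" using slt_sle_trans[OF xy yz] by (simp add: not_sle)
  then have "compatible s (x,c3) (z,c2)"
    using c[unfolded colouring_triple] by (auto simp: compatible_def)
  with c have "colouring s k ((pa @ [(y,c1)]) @ [(x,c3),(z,c2)] @ pb)"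
    using colouring_swap[of s k "pa @ [(y,c1)]"] by simp
  then show "\<exists>ps'. map fst ps' = map fst pa @ [y,x,z] @ map fst pb \<and> colouring s k ps' \<and>
      ncol ps' = ncol (pa @ [(y,c1),(z,c2),(x,c3)] @ pb)"
    by (intro exI[of _ "pa @ [(y,c1),(x,c3),(z,c2)] @ pb"]) simp
qed

(* From y x z to y z x, when x and z share colour m: if y is uncoloured, y takes over x's role. *)
lemma recolour_A_uncoloured:
  assumes xy: "slt s x y" and yz: "sle s y z"
    and c: "colouring s k (pa @ [(y,None),(x,Some m),(z,Some m)] @ pb)"
  shows "colouring s k (pa @ [(y,Some m),(z,Some m),(x,None)] @ pb)"
proof -
  note C = c[unfolded colouring_triple]
  have pa_m: "sle s (fst p) x" if "p \<in> set pa" "snd p = Some m" for p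
    using C that by (auto simp: compatible_def)
  have pb_m: "sle s z (fst q)" if "q \<in> set pb" "snd q = Some m" for q
    using C that by (auto simp: compatible_def)
  have pa_pb: "compatible s p q" if "p \<in> set pa" "q \<in> set pb" for p q
    using C that by blast
  show ?thesis
    unfolding colouring_triple
  proof (intro conjI ballI)
    fix p assume p: "p \<in> set pa"
    show "compatible s p (y, Some m)" "compatible s p (z, Some m)"
      using pa_m[OF p] sle_slt_weaken[OF _ xy] sle_trans[OF _ yz] by (auto simp: compatible_def)
  next
    fix q assume q: "q \<in> set pb"
    show "compatible s (y, Some m) q"
      using pb_m[OF q] sle_trans[OF yz] by (auto simp: compatible_def)
  qed (use C yz pa_pb pb_m in \<open>auto simp: compatible_def\<close>)
qed

(* ... and if y has colour m', the classes m and m' exchange their tails after the factor. *)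
lemma recolour_A_exchange:
  assumes xy: "slt s x y" and yz: "sle s y z"
    and c: "colouring s k (pa @ [(y,Some m'),(x,Some m),(z,Some m)] @ pb)"
  shows "colouring s k (pa @ [(y,Some m'),(z,Some m'),(x,Some m)] @
                        map (apsnd (swap_colour m m')) pb)"
proof -
  note C = c[unfolded colouring_triple]
  have ne: "m' \<noteq> m" using C xy by (auto simp: compatible_def not_slt[symmetric])
  have pa_m: "sle s (fst p) x" if "p \<in> set pa" "snd p = Some m" for p
    using C that by (auto simp: compatible_def)
  have pb_m: "sle s z (fst q)" if "q \<in> set pb" "snd q = Some m" for q
    using C that by (auto simp: compatible_def)
  have pa_m': "sle s (fst p) y" if "p \<in> set pa" "snd p = Some m'" for p
    using C that by (auto simp: compatible_def)
  have pb_m': "sle s y (fst q)" if "q \<in> set pb" "snd q = Some m'" for q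
    using C that by (auto simp: compatible_def)
  have pb': "colouring s k (map (apsnd (swap_colour m m')) pb)"
    using C by (intro colouring_swap_colour) (auto simp: colouring_def)
  have cross: "compatible s p (apsnd (swap_colour m m') q)" if "p \<in> set pa" "q \<in> set pb" for p q
    using C that pa_m'[of p] pb_m[of q] pa_m[of p] pb_m'[of q]
      sle_trans[OF _ yz] sle_slt_weaken[OF _ xy] sle_trans
    by (intro compatible_swap_colour) blast+
  have pb_after: "(snd q = Some m \<longrightarrow> sle s y (fst q) \<and> sle s z (fst q)) \<and>
      (snd q = Some m' \<longrightarrow> sle s x (fst q))" if "q \<in> set pb" for q
    using that pb_m pb_m' sle_trans[OF yz] slt_sle_weaken[OF xy] by blast
  show ?thesis
    unfolding colouring_triple
  proof (intro conjI ballI)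
    fix p assume p: "p \<in> set pa"
    show "compatible s p (y, Some m')" "compatible s p (z, Some m')" "compatible s p (x, Some m)"
      using pa_m[OF p] pa_m'[OF p] sle_trans[OF _ yz] by (auto simp: compatible_def)
    show "compatible s p q" if "q \<in> set (map (apsnd (swap_colour m m')) pb)" for q
      using that cross[OF p] by auto
  next
    fix q assume "q \<in> set (map (apsnd (swap_colour m m')) pb)"
    then obtain q0 where q0: "q0 \<in> set pb" "q = apsnd (swap_colour m m') q0" by auto
    show "compatible s (y, Some m') q" "compatible s (z, Some m') q" "compatible s (x, Some m) q"
      using q0 pb_after[OF q0(1)] ne by (auto simp: compatible_def swap_colour_def)
  qed (use C pb' ne yz in \<open>auto simp: compatible_def colouring_def\<close>)
qed

lemma recolour_A_backward:
  assumes xy: "slt s x y" and yz: "sle s y z"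
  shows "recolourable s [y,x,z] [y,z,x]"
proof (rule recolourable_triple_intro)
  fix pa pb c1 c2 c3 k
  assume c: "colouring s k (pa @ [(y,c1),(x,c2),(z,c3)] @ pb)"
  show "\<exists>ps'. map fst ps' = map fst pa @ [y,z,x] @ map fst pb \<and> colouring s k ps' \<and>
      ncol ps' = ncol (pa @ [(y,c1),(x,c2),(z,c3)] @ pb)"
  proof (cases "compatible s (z,c3) (x,c2)")
    case True
    with c have "colouring s k ((pa @ [(y,c1)]) @ [(z,c3),(x,c2)] @ pb)"
      using colouring_swap[of s k "pa @ [(y,c1)]"] by simp
    then show ?thesis by (intro exI[of _ "pa @ [(y,c1),(z,c3),(x,c2)] @ pb"]) simp
  next
    case False
    then obtain m where m: "c2 = Some m" "c3 = Some m" by (auto simp: compatible_def)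
    show ?thesis
    proof (cases c1)
      case None
      then show ?thesis using recolour_A_uncoloured[OF xy yz, of k pa m pb] c m
        by (intro exI[of _ "pa @ [(y,Some m),(z,Some m),(x,None)] @ pb"]) simp
    next
      case (Some m')
      then show ?thesis using recolour_A_exchange[OF xy yz, of k pa m' m pb] c m
        by (intro exI[of _ "pa @ [(y,Some m'),(z,Some m'),(x,Some m)] @
                              map (apsnd (swap_colour m m')) pb"]) simp
    qed
  qed
qed

lemma recolour_B_forward:
  assumes xy: "sle s x y" and yz: "slt s y z"
  shows "recolourable s [z,x,y] [x,z,y]"
proof (rule recolourable_triple_intro)
  fix pa pb c1 c2 c3 k
  assume c: "colouring s k (pa @ [(z,c1),(x,c2),(y,c3)] @ pb)"
  have "\<not> sle s z x" using sle_slt_trans[OF xy yz] by (simp add: not_sle)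
  then have "compatible s (x,c2) (z,c1)"
    using c[unfolded colouring_triple] by (auto simp: compatible_def)
  with c have "colouring s k (pa @ [(x,c2),(z,c1)] @ (y,c3) # pb)"
    using colouring_swap[of s k pa "(z,c1)" "(x,c2)" "(y,c3) # pb"] by simp
  then show "\<exists>ps'. map fst ps' = map fst pa @ [x,z,y] @ map fst pb \<and> colouring s k ps' \<and>
      ncol ps' = ncol (pa @ [(z,c1),(x,c2),(y,c3)] @ pb)"
    by (intro exI[of _ "pa @ [(x,c2),(z,c1),(y,c3)] @ pb"]) simp
qed

lemma recolour_B_uncoloured:
  assumes xy: "sle s x y" and yz: "slt s y z"
    and c: "colouring s k (pa @ [(x,Some m),(z,Some m),(y,None)] @ pb)"
  shows "colouring s k (pa @ [(z,None),(x,Some m),(y,Some m)] @ pb)"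
proof -
  note C = c[unfolded colouring_triple]
  have pa_m: "sle s (fst p) x" if "p \<in> set pa" "snd p = Some m" for p
    using C that by (auto simp: compatible_def)
  have pb_m: "sle s z (fst q)" if "q \<in> set pb" "snd q = Some m" for q
    using C that by (auto simp: compatible_def)
  have pa_pb: "compatible s p q" if "p \<in> set pa" "q \<in> set pb" for p q
    using C that by blast
  show ?thesis
    unfolding colouring_triple
  proof (intro conjI ballI)
    fix p assume p: "p \<in> set pa"
    show "compatible s p (x, Some m)" "compatible s p (y, Some m)"
      using pa_m[OF p] sle_trans[OF _ xy] by (auto simp: compatible_def)
  next
    fix q assume q: "q \<in> set pb"
    show "compatible s (y, Some m) q" "compatible s (x, Some m) q"
      using pb_m[OF q] slt_sle_weaken[OF yz] sle_trans[OF xy] by (auto simp: compatible_def)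
  qed (use C xy pa_pb in \<open>auto simp: compatible_def\<close>)
qed

lemma recolour_B_exchange:
  assumes xy: "sle s x y" and yz: "slt s y z"
    and c: "colouring s k (pa @ [(x,Some m),(z,Some m),(y,Some m')] @ pb)"
  shows "colouring s k (pa @ [(z,Some m'),(x,Some m),(y,Some m)] @
                        map (apsnd (swap_colour m m')) pb)"
proof -
  note C = c[unfolded colouring_triple]
  have ne: "m' \<noteq> m" using C yz by (auto simp: compatible_def not_slt[symmetric])
  have pa_m: "sle s (fst p) x" if "p \<in> set pa" "snd p = Some m" for p
    using C that by (auto simp: compatible_def)
  have pb_m: "sle s z (fst q)" if "q \<in> set pb" "snd q = Some m" for q
    using C that by (auto simp: compatible_def)
  have pa_m': "sle s (fst p) y" if "p \<in> set pa" "snd p = Some m'" for p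
    using C that by (auto simp: compatible_def)
  have pb_m': "sle s y (fst q)" if "q \<in> set pb" "snd q = Some m'" for q
    using C that by (auto simp: compatible_def)
  have pb': "colouring s k (map (apsnd (swap_colour m m')) pb)"
    using C by (intro colouring_swap_colour) (auto simp: colouring_def)
  have cross: "compatible s p (apsnd (swap_colour m m') q)" if "p \<in> set pa" "q \<in> set pb" for p q
    using C that pa_m'[of p] pb_m[of q] pa_m[of p] pb_m'[of q]
      sle_slt_weaken[OF _ yz] sle_trans[OF _ xy] sle_trans
    by (intro compatible_swap_colour) blast+
  have pb_after: "(snd q = Some m \<longrightarrow> sle s z (fst q)) \<and>
      (snd q = Some m' \<longrightarrow> sle s x (fst q) \<and> sle s y (fst q))" if "q \<in> set pb" for q
    using that pb_m pb_m' sle_trans[OF xy] by blast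
  show ?thesis
    unfolding colouring_triple
  proof (intro conjI ballI)
    fix p assume p: "p \<in> set pa"
    show "compatible s p (z, Some m')" "compatible s p (x, Some m)" "compatible s p (y, Some m)"
      using pa_m[OF p] pa_m'[OF p] sle_slt_weaken[OF _ yz] sle_trans[OF _ xy]
      by (auto simp: compatible_def)
    show "compatible s p q" if "q \<in> set (map (apsnd (swap_colour m m')) pb)" for q
      using that cross[OF p] by auto
  next
    fix q assume "q \<in> set (map (apsnd (swap_colour m m')) pb)"
    then obtain q0 where q0: "q0 \<in> set pb" "q = apsnd (swap_colour m m') q0" by auto
    show "compatible s (z, Some m') q" "compatible s (x, Some m) q" "compatible s (y, Some m) q"
      using q0 pb_after[OF q0(1)] ne by (auto simp: compatible_def swap_colour_def)
  qed (use C pb' ne xy in \<open>auto simp: compatible_def colouring_def\<close>)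
qed

lemma recolour_B_backward:
  assumes xy: "sle s x y" and yz: "slt s y z"
  shows "recolourable s [x,z,y] [z,x,y]"
proof (rule recolourable_triple_intro)
  fix pa pb c1 c2 c3 k
  assume c: "colouring s k (pa @ [(x,c1),(z,c2),(y,c3)] @ pb)"
  show "\<exists>ps'. map fst ps' = map fst pa @ [z,x,y] @ map fst pb \<and> colouring s k ps' \<and>
      ncol ps' = ncol (pa @ [(x,c1),(z,c2),(y,c3)] @ pb)"
  proof (cases "compatible s (z,c2) (x,c1)")
    case True
    with c have "colouring s k (pa @ [(z,c2),(x,c1)] @ (y,c3) # pb)"
      using colouring_swap[of s k pa "(x,c1)" "(z,c2)" "(y,c3) # pb"] by simp
    then show ?thesis by (intro exI[of _ "pa @ [(z,c2),(x,c1),(y,c3)] @ pb"]) simp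
  next
    case False
    then obtain m where m: "c1 = Some m" "c2 = Some m" by (auto simp: compatible_def)
    show ?thesis
    proof (cases c3)
      case None
      then show ?thesis using recolour_B_uncoloured[OF xy yz, of k pa m pb] c m
        by (intro exI[of _ "pa @ [(z,None),(x,Some m),(y,Some m)] @ pb"]) simp
    next
      case (Some m')
      then show ?thesis using recolour_B_exchange[OF xy yz, of k pa m m' pb] c m
        by (intro exI[of _ "pa @ [(z,Some m'),(x,Some m),(y,Some m)] @
                              map (apsnd (swap_colour m m')) pb"]) simp
    qed
  qed
qed

lemma knuth_A: "slt s x y \<Longrightarrow> sle s y z \<Longrightarrow> knuth_equiv s [y,z,x] [y,x,z]"
  unfolding knuth_equiv_def using recolour_A_forward recolour_A_backward by blast

lemma knuth_B: "sle s x y \<Longrightarrow> slt s y z \<Longrightarrow> knuth_equiv s [x,z,y] [z,x,y]"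
  unfolding knuth_equiv_def using recolour_B_forward recolour_B_backward by blast

(* Row insertion as a sequence of Knuth moves: the inserted letter x travels left through the
   part of the row it does not bump (relation (A)) ... *)
lemma knuth_insert_past_row:
  "sorted_wrt (sle s) (c # b) \<Longrightarrow> slt s x c \<Longrightarrow> knuth_equiv s (c # b @ [x]) (c # x # b)"
proof (induction b rule: rev_induct)
  case Nil then show ?case by (simp add: knuth_equiv_refl)
next
  case (snoc d b0)
  obtain pre e where pe: "c # b0 = pre @ [e]" by (metis rev_exhaust list.distinct(1))
  have se: "e \<in> set (c # b0)" using pe by (metis in_set_conv_decomp)
  have s0: "sorted_wrt (sle s) (c # b0)" using snoc.prems(1) by (simp add: sorted_wrt_append)
  have xe: "slt s x e"
  proof (cases "e = c")
    case True then show ?thesis using snoc.prems by simp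
  next
    case False then have "sle s c e" using se snoc.prems(1) by (auto simp: sorted_wrt_append)
    then show ?thesis using slt_sle_trans snoc.prems(2) by blast
  qed
  have ed: "sle s e d" using se snoc.prems(1) by (auto simp: sorted_wrt_append)
  have "knuth_equiv s (pre @ [e,d,x] @ []) (pre @ [e,x,d] @ [])"
    using knuth_A[OF xe ed] knuth_equiv_context by blast
  then have 1: "knuth_equiv s (c # (b0 @ [d]) @ [x]) ((c # b0 @ [x]) @ [d])" using pe
    by (metis append.assoc append_Cons append_Nil append_Nil2)
  have "knuth_equiv s ((c # b0 @ [x]) @ [d]) ((c # x # b0) @ [d])"
    using knuth_equiv_suffix snoc.IH[OF s0 snoc.prems(2)] by blast
  then show ?case using knuth_equiv_trans[OF 1] by simp
qed

(* ... and the bumped letter y travels left to the front of the row (relation (B)). *)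
lemma knuth_bumped_past_prefix: "sorted_wrt (sle s) a \<Longrightarrow> \<forall>e\<in>set a. sle s e v \<Longrightarrow> slt s v y \<Longrightarrow>
  knuth_equiv s (a @ y # v # c) (y # a @ v # c)"
proof (induction a arbitrary: v c rule: rev_induct)
  case Nil then show ?case by (simp add: knuth_equiv_refl)
next
  case (snoc e a0)
  have ev: "sle s e v" using snoc.prems(2) by simp
  have 1: "knuth_equiv s (a0 @ [e,y,v] @ c) (a0 @ [y,e,v] @ c)"
    using knuth_B[OF ev snoc.prems(3)] knuth_equiv_context by blast
  have ey: "slt s e y" using sle_slt_trans[OF ev snoc.prems(3)] .
  have "knuth_equiv s (a0 @ y # e # (v # c)) (y # a0 @ e # (v # c))"
    using snoc.IH[of e "v # c"] snoc.prems(1) ey by (simp add: sorted_wrt_append)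
  then show ?case using knuth_equiv_trans[OF 1] by simp
qed

lemma row_ins_None: "row_ins bump x r = (None, r') \<Longrightarrow> r' = r @ [x] \<and> (\<forall>e\<in>set r. \<not> bump x e)"
  by (induction r arbitrary: r') (auto split: if_splits prod.splits)

lemma row_ins_Some: "row_ins bump x r = (Some y, r') \<Longrightarrow>
  \<exists>j<length r. y = r ! j \<and> r' = r[j := x] \<and> bump x y \<and> (\<forall>i<j. \<not> bump x (r ! i))"
proof (induction r arbitrary: r')
  case Nil then show ?case by simp
next
  case (Cons e es)
  show ?case
  proof (cases "bump x e")
    case True then show ?thesis using Cons.prems by (intro exI[of _ 0]) auto
  next
    case False
    then obtain es' where es': "row_ins bump x es = (Some y, es')" "r' = e # es'"
      using Cons.prems by (auto split: prod.splits)
    from Cons.IH[OF es'(1)] obtain j where "j<length es" "y = es ! j" "es' = es[j := x]" "bump x y"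
      "\<forall>i<j. \<not> bump x (es ! i)" by blast
    then show ?thesis using False es'(2)
      by (intro exI[of _ "Suc j"]) (auto simp: nth_Cons split: nat.splits)
  qed
qed

lemma knuth_row_ins:
  assumes sr: "sorted_wrt (sle s) r" and ri: "row_ins (slt s) x r = (Some y, r')"
  shows "knuth_equiv s (r @ [x]) (y # r')"
proof -
  from row_ins_Some[OF ri] obtain j where j: "j<length r" "y = r ! j" "r' = r[j := x]" "slt s x y"
      "\<forall>i<j. \<not> slt s x (r ! i)" by blast
  define a where "a = take j r"
  define b where "b = drop (Suc j) r"
  have r: "r = a @ y # b" using j by (simp add: a_def b_def id_take_nth_drop)
  have r': "r' = a @ x # b" using j by (simp add: a_def b_def upd_conv_take_nth_drop)
  have sa: "sorted_wrt (sle s) a" and syb: "sorted_wrt (sle s) (y # b)"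
    using sr r by (auto simp: sorted_wrt_append)
  have ae: "\<forall>e\<in>set a. sle s e x"
  proof
    fix e assume "e \<in> set a"
    then obtain i where "i < j" "e = r ! i" using j(1) by (auto simp: a_def in_set_conv_nth)
    then show "sle s e x" using j(5) by (simp add: not_slt)
  qed
  have "knuth_equiv s (a @ (y # b @ [x])) (a @ (y # x # b))"
    using knuth_equiv_prefix knuth_insert_past_row[OF syb j(4)] by blast
  moreover have "knuth_equiv s (a @ y # x # b) (y # a @ x # b)"
    using knuth_bumped_past_prefix[OF sa ae j(4)] .
  ultimately show ?thesis using r r' knuth_equiv_trans by fastforce
qed

lemma row_ins_sorted:
  assumes sr: "sorted_wrt (sle s) r" and ri: "row_ins (slt s) x r = (c, r')"
  shows "sorted_wrt (sle s) r'"
proof (cases c)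
  case None
  then show ?thesis
    using row_ins_None[of "slt s" x r r'] ri sr by (auto simp: sorted_wrt_append not_slt)
next
  case (Some y)
  from row_ins_Some[of "slt s" x r y r'] ri Some
  obtain j where j: "j<length r" "y = r ! j" "r' = r[j := x]" "slt s x y"
      "\<forall>i<j. \<not> slt s x (r ! i)" by blast
  show ?thesis unfolding sorted_wrt_iff_nth_less
  proof (intro allI impI)
    fix i l assume il: "i < l" "l < length r'"
    have srn: "\<And>i l. i < l \<Longrightarrow> l < length r \<Longrightarrow> sle s (r!i) (r!l)"
      using sr by (simp add: sorted_wrt_iff_nth_less)
    show "sle s (r' ! i) (r' ! l)"
    proof (cases "i = j")
      case True
      then show ?thesis using il j srn[of j l] slt_sle_weaken by (auto simp: nth_list_update)
    next
      case False
      then show ?thesis using il j srn[of i l] srn[of i j] not_slt by (auto simp: nth_list_update)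
    qed
  qed
qed

definition reading_word :: "nat list list \<Rightarrow> nat list" where "reading_word T = concat (rev T)"

lemma knuth_tab_ins:
  "\<forall>r\<in>set T. sorted_wrt (sle s) r \<Longrightarrow>
     knuth_equiv s (reading_word T @ [x]) (reading_word (tab_ins (slt s) x T))
     \<and> (\<forall>r\<in>set (tab_ins (slt s) x T). sorted_wrt (sle s) r)"
proof (induction T arbitrary: x)
  case Nil then show ?case by (simp add: reading_word_def knuth_equiv_refl)
next
  case (Cons r rs)
  show ?case
  proof (cases "row_ins (slt s) x r")
    case (Pair c r')
    have sr': "sorted_wrt (sle s) r'" using row_ins_sorted Cons.prems Pair by auto
    show ?thesis
    proof (cases c)
      case None
      then show ?thesis
        using Pair row_ins_None[of "slt s" x r r'] sr' Cons.prems
        by (simp add: reading_word_def knuth_equiv_refl)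
    next
      case (Some y)
      have k1: "knuth_equiv s (reading_word rs @ (r @ [x])) (reading_word rs @ (y # r'))"
        using knuth_equiv_prefix knuth_row_ins Pair Some Cons.prems by auto
      have ih: "knuth_equiv s (reading_word rs @ [y]) (reading_word (tab_ins (slt s) y rs))"
          "\<forall>r\<in>set (tab_ins (slt s) y rs). sorted_wrt (sle s) r"
        using Cons.IH Cons.prems by auto
      have k2: "knuth_equiv s ((reading_word rs @ [y]) @ r')
                              (reading_word (tab_ins (slt s) y rs) @ r')"
        using knuth_equiv_suffix ih(1) by blast
      show ?thesis
        using knuth_equiv_trans[OF k1] k2 ih(2) sr' Pair Some by (simp add: reading_word_def)
    qed
  qed
qed

lemma knuth_rsk:
  "knuth_equiv s u (reading_word (rsk (slt s) u)) \<and> (\<forall>r\<in>set (rsk (slt s) u). sorted_wrt (sle s) r)"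
proof (induction u rule: rev_induct)
  case Nil then show ?case by (simp add: rsk_def reading_word_def knuth_equiv_refl)
next
  case (snoc x u)
  have e: "rsk (slt s) (u @ [x]) = tab_ins (slt s) x (rsk (slt s) u)" by (simp add: rsk_def)
  have "knuth_equiv s (u @ [x]) (reading_word (rsk (slt s) u) @ [x])"
    using knuth_equiv_suffix snoc by blast
  then show ?case using e knuth_tab_ins[of "rsk (slt s) u" s x] snoc knuth_equiv_trans by auto
qed

fun col_strict :: "(nat \<Rightarrow> bool) \<Rightarrow> nat list \<Rightarrow> nat list list \<Rightarrow> bool" where
  "col_strict s R [] = True"
| "col_strict s R (r # _) = (length r \<le> length R \<and> (\<forall>j<length r. slt s (R ! j) (r ! j)))"

fun tableau :: "(nat \<Rightarrow> bool) \<Rightarrow> nat list list \<Rightarrow> bool" where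
  "tableau s [] = True"
| "tableau s (r # rs) = (sorted_wrt (sle s) r \<and> col_strict s r rs \<and> tableau s rs)"

lemma row_ins_position:
  assumes "row_ins bump x r = (c, r')"
  obtains i where "i \<le> length r" "length r' = max (length r) (Suc i)" "r' ! i = x"
    "\<And>l. l < length r \<Longrightarrow> l \<noteq> i \<Longrightarrow> r' ! l = r ! l" "\<And>l. l < i \<Longrightarrow> \<not> bump x (r ! l)"
proof (cases c)
  case None
  then have r': "r' = r @ [x]" and "\<forall>e\<in>set r. \<not> bump x e"
    using row_ins_None[of bump x r r'] assms by simp_all
  then have "\<And>l. l < length r \<Longrightarrow> \<not> bump x (r ! l)" by simp
  with r' show ?thesis by (intro that[of "length r"]) (simp_all add: nth_append)
next
  case (Some y)
  then obtain j where "j < length r" "r' = r[j := x]" "\<forall>i<j. \<not> bump x (r ! i)"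
    using row_ins_Some[of bump x r y r'] assms by blast
  then show ?thesis by (intro that[of j]) simp_all
qed

(* Key step for the column condition: the letter y bumped from column j of R enters the next row
   in a column <= j, and the new entries stay strictly below the modified row R. *)
lemma col_strict_tab_ins:
  assumes a: "col_strict s R T" and j: "j < length R" and y: "y = R ! j"
    and xy: "slt s x y" and left: "\<forall>i<j. sle s (R ! i) x"
  shows "col_strict s (R[j := x]) (tab_ins (slt s) y T)"
proof -
  have left_of_j: "slt s (R[j := x] ! l) y" if "l \<le> j" for l
  proof (cases "l = j")
    case True then show ?thesis using j xy by simp
  next
    case False
    then have "sle s (R ! l) x" using left that by simp
    then show ?thesis using False j sle_slt_trans[OF _ xy] by simp
  qed
  show ?thesis
  proof (cases T)
    case Nil then show ?thesis using j left_of_j[of 0] by simp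
  next
    case (Cons r1 rs)
    obtain c r1' where ins: "row_ins (slt s) y r1 = (c, r1')" by (cases "row_ins (slt s) y r1")
    obtain i where i: "i \<le> length r1" "length r1' = max (length r1) (Suc i)" "r1' ! i = y"
      "\<And>l. l < length r1 \<Longrightarrow> l \<noteq> i \<Longrightarrow> r1' ! l = r1 ! l" "\<And>l. l < i \<Longrightarrow> \<not> slt s y (r1 ! l)"
      using row_ins_position[OF ins] by blast
    have a1: "length r1 \<le> length R" "\<And>l. l < length r1 \<Longrightarrow> slt s (R ! l) (r1 ! l)"
      using a Cons by auto
    have ij: "i \<le> j"
    proof (rule ccontr)
      assume "\<not> i \<le> j"
      then have "slt s y (r1 ! j)" using a1(2) i(1) y by simp
      then show False using i(5) \<open>\<not> i \<le> j\<close> by simp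
    qed
    have "slt s (R[j := x] ! l) (r1' ! l)" if l: "l < length r1'" for l
    proof (cases "l = i")
      case True then show ?thesis using left_of_j ij i(3) by simp
    next
      case False
      then have l1: "l < length r1" using l i(1,2) by auto
      show ?thesis
      proof (cases "l = j")
        case True
        have "slt s y (r1 ! j)" using a1(2) y l1 True by simp
        then show ?thesis using True j xy i(4)[OF l1 False] slt_trans by simp
      next
        case False
        then show ?thesis using a1(2)[OF l1] i(4)[OF l1 \<open>l \<noteq> i\<close>] by simp
      qed
    qed
    moreover have "length r1' \<le> length R" using i(2) a1(1) ij j by simp
    moreover obtain rest where "tab_ins (slt s) y T = r1' # rest"
      using Cons ins by (cases c) auto
    ultimately show ?thesis by simp
  qed
qed

lemma tab_ins_tableau: "tableau s T \<Longrightarrow> tableau s (tab_ins (slt s) x T)"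
proof (induction T arbitrary: x)
  case Nil then show ?case by simp
next
  case (Cons r rs)
  obtain c r' where ins: "row_ins (slt s) x r = (c, r')" by (cases "row_ins (slt s) x r")
  have sr': "sorted_wrt (sle s) r'" using row_ins_sorted[of s r x c r'] Cons.prems ins by simp
  show ?case
  proof (cases c)
    case None
    have "r' = r @ [x]" using row_ins_None[of "slt s" x r r'] ins None by simp
    then have "col_strict s r' rs" using Cons.prems by (cases rs) (auto simp: nth_append)
    then show ?thesis using ins None Cons.prems sr' by simp
  next
    case (Some y)
    obtain j where j: "j < length r" "y = r ! j" "r' = r[j := x]" "slt s x y"
        "\<forall>i<j. \<not> slt s x (r ! i)" using row_ins_Some[of "slt s" x r y r'] ins Some by blast
    have "col_strict s r' (tab_ins (slt s) y rs)"
      using col_strict_tab_ins[of s r rs j y x] Cons.prems j by (simp add: not_slt)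
    then show ?thesis using ins Some Cons.prems Cons.IH sr' by simp
  qed
qed

lemma rsk_tableau: "tableau s (rsk (slt s) u)"
proof (induction u rule: rev_induct)
  case Nil then show ?case by (simp add: rsk_def)
next
  case (snoc x u)
  then show ?case using tab_ins_tableau by (simp add: rsk_def)
qed

fun row_colouring :: "nat \<Rightarrow> nat \<Rightarrow> nat list list \<Rightarrow> (nat \<times> nat option) list" where
  "row_colouring k off [] = []"
| "row_colouring k off (r # rs) =
     row_colouring k (Suc off) rs @ map (\<lambda>a. (a, if off < k then Some off else None)) r"

lemma row_colouring_props:
  "\<forall>r\<in>set T. sorted_wrt (sle s) r \<Longrightarrow>
   map fst (row_colouring k off T) = reading_word T \<and> colouring s k (row_colouring k off T) \<and>
   ncol (row_colouring k off T) = sum_list (take (k - off) (map length T)) \<and>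
   (\<forall>p\<in>set (row_colouring k off T). \<forall>m. snd p = Some m \<longrightarrow> off \<le> m)"
proof (induction T arbitrary: off)
  case Nil then show ?case by (simp add: reading_word_def colouring_def)
next
  case (Cons r rs)
  let ?c = "if off < k then Some off else None"
  have ih: "map fst (row_colouring k (Suc off) rs) = reading_word rs"
     "colouring s k (row_colouring k (Suc off) rs)"
     "ncol (row_colouring k (Suc off) rs) = sum_list (take (k - Suc off) (map length rs))"
     "\<forall>p\<in>set (row_colouring k (Suc off) rs). \<forall>m. snd p = Some m \<longrightarrow> Suc off \<le> m"
    using Cons by auto
  have sr: "sorted_wrt (sle s) r" using Cons.prems by simp
  have s1: "sorted_wrt (compatible s) (map (\<lambda>a. (a, ?c)) r)"
    unfolding sorted_wrt_map by (rule sorted_wrt_mono_rel[OF _ sr]) (simp add: compatible_def)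
  have cr: "\<forall>p\<in>set (row_colouring k (Suc off) rs). \<forall>q\<in>set (map (\<lambda>a. (a, ?c)) r). compatible s p q"
  proof (intro ballI)
    fix p q
    assume p: "p \<in> set (row_colouring k (Suc off) rs)" and q: "q \<in> set (map (\<lambda>a. (a, ?c)) r)"
    have "snd q = ?c" using q by auto
    moreover have "snd p \<noteq> Some off" using ih(4) p by fastforce
    ultimately show "compatible s p q" unfolding compatible_def by (cases "off < k") auto
  qed
  have bd: "\<forall>p\<in>set (map (\<lambda>a. (a, ?c)) r). \<forall>m. snd p = Some m \<longrightarrow> m < k" by auto
  have v: "colouring s k (row_colouring k off (r # rs))"
    using ih(2) s1 cr bd unfolding colouring_def row_colouring.simps sorted_wrt_append set_append
    by blast
  have c: "ncol (map (\<lambda>a. (a, ?c)) r) = (if off < k then length r else 0)"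
    by (simp add: ncol_def)
  have "ncol (row_colouring k off (r # rs)) = sum_list (take (k - off) (map length (r # rs)))"
  proof (cases "off < k")
    case True
    then have "take (k - off) (map length (r # rs)) = length r # take (k - Suc off) (map length rs)"
      using Suc_diff_Suc[OF True] by (metis list.simps(9) take_Suc_Cons)
    then show ?thesis using ih(3) c True by simp
  next
    case False
    then show ?thesis using ih(3) c by simp
  qed
  moreover have "map fst (row_colouring k off (r # rs)) = reading_word (r # rs)"
    using ih(1) by (simp add: reading_word_def comp_def)
  ultimately show ?case using ih(4) v by auto
qed

(* Split the colouring along the rows and remove the first column:
   its coloured entries carry distinct colours (they strictly decrease in reading order while a
   colour class is weakly increasing), so at most k of them, and at most as many as there are
   nonempty rows among the first k, are coloured. *)
lemma split_rows: "map fst ps = concat (rev T) \<Longrightarrow> \<exists>PS. ps = concat (rev PS) \<and> map (map fst) PS = T"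
proof (induction T arbitrary: ps)
  case Nil then show ?case by simp
next
  case (Cons r rs)
  then obtain us vs where "ps = us @ vs" "map fst us = concat (rev rs)" "map fst vs = r"
    by (auto simp: map_eq_append_conv)
  moreover from Cons.IH[OF this(2)]
  obtain PS0 where "us = concat (rev PS0)" "map (map fst) PS0 = rs"
    by blast
  ultimately show ?case by (intro exI[of _ "vs # PS0"]) auto
qed

lemma tableau_length: "tableau s (R # rs) \<Longrightarrow> r \<in> set rs \<Longrightarrow> length r \<le> length R"
proof (induction rs arbitrary: R)
  case Nil then show ?case by simp
next
  case (Cons r1 rs)
  show ?case
  proof (cases "r = r1")
    case True then show ?thesis using Cons.prems by simp
  next
    case False
    then have "length r \<le> length r1" using Cons.IH[of r1] Cons.prems by simp
    moreover have "length r1 \<le> length R" using Cons.prems by simp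
    ultimately show ?thesis by simp
  qed
qed

lemma tableau_hd: "tableau s (R # rs) \<Longrightarrow> r \<in> set rs \<Longrightarrow> r \<noteq> [] \<Longrightarrow> slt s (hd R) (hd r) \<and> R \<noteq> []"
proof (induction rs arbitrary: R)
  case Nil then show ?case by simp
next
  case (Cons r1 rs)
  show ?case
  proof (cases "r = r1")
    case True
    then show ?thesis using Cons.prems by (cases r1; cases R) auto
  next
    case False
    then have "r \<in> set rs" using Cons.prems by simp
    then have "slt s (hd r1) (hd r) \<and> r1 \<noteq> []" using Cons.IH[of r1] Cons.prems by simp
    moreover have "slt s (hd R) (hd r1) \<and> R \<noteq> []"
      using Cons.prems calculation by (cases r1; cases R) auto
    ultimately show ?thesis using slt_trans by blast
  qed
qed

lemma tableau_tl: "tableau s T \<Longrightarrow> tableau s (map tl T)"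
proof (induction T)
  case Nil then show ?case by simp
next
  case (Cons r rs)
  have "sorted_wrt (sle s) (tl r)" using Cons.prems by (cases r) auto
  moreover have "col_strict s (tl r) (map tl rs)"
    using Cons.prems by (cases rs) (auto simp: nth_tl)
  ultimately show ?case using Cons by simp
qed

lemma in_set_tlD: "x \<in> set (tl r) \<Longrightarrow> x \<in> set r" by (cases r) auto

lemma set_concat_tl: "x \<in> set (concat (rev (map tl PS))) \<Longrightarrow> x \<in> set (concat (rev PS))"
  by (auto dest: in_set_tlD)

lemma sorted_tl_rows: "sorted_wrt R (concat (rev PS)) \<Longrightarrow> sorted_wrt R (concat (rev (map tl PS)))"
proof (induction PS)
  case Nil then show ?case by simp
next
  case (Cons p PS)
  have "sorted_wrt R (tl p)" using Cons.prems by (cases p) (auto simp: sorted_wrt_append)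
  then show ?case using Cons by (simp add: sorted_wrt_append) (metis in_set_tlD)
qed

lemma colouring_tl_rows:
  "colouring s k (concat (rev PS)) \<Longrightarrow> colouring s k (concat (rev (map tl PS)))"
  unfolding colouring_def using sorted_tl_rows set_concat_tl by metis

lemma ncol_rows: "ncol (concat (rev PS)) = sum_list (map ncol PS)"
  by (induction PS) auto

lemma ncol_tl_rows: "sum_list (map ncol PS) = sum_list (map ncol (map tl PS)) +
   length (filter (\<lambda>r. r \<noteq> [] \<and> snd (hd r) \<noteq> None) PS)"
proof (induction PS)
  case Nil then show ?case by simp
next
  case (Cons p PS) then show ?case by (cases p) auto
qed

lemma length_tl_rows:
  "sum_list (take k (map length PS)) = sum_list (take k (map length (map tl PS))) +
   length (filter (\<lambda>r. r \<noteq> []) (take k PS))"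
proof (induction PS arbitrary: k)
  case Nil then show ?case by simp
next
  case (Cons p PS) then show ?case by (cases k; cases p) auto
qed

lemma tableau_empty_row: "tableau s ([] # rs) \<Longrightarrow> r \<in> set rs \<Longrightarrow> r = []"
  using tableau_length by fastforce

lemma nonempty_rows_take:
  "tableau s T \<Longrightarrow>
   length (filter (\<lambda>r. r \<noteq> []) (take k T)) = min k (length (filter (\<lambda>r. r \<noteq> []) T))"
proof (induction T arbitrary: k)
  case Nil then show ?case by simp
next
  case (Cons r rs)
  show ?case
  proof (cases "r = []")
    case True
    then have "\<forall>r\<in>set rs. r = []" using tableau_empty_row Cons.prems by blast
    then have "filter (\<lambda>r. r \<noteq> []) rs = []" "filter (\<lambda>r. r \<noteq> []) (take k' rs) = []" for k'
      by (auto simp: filter_empty_conv dest: in_set_takeD)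
    then show ?thesis using True by (cases k) auto
  next
    case False
    then show ?thesis using Cons by (cases k) auto
  qed
qed

lemma first_column_colours_distinct:
  "tableau s (map (map fst) PS) \<Longrightarrow> colouring s k (concat (rev PS)) \<Longrightarrow>
   distinct (map (\<lambda>r. snd (hd r)) (filter (\<lambda>r. r \<noteq> [] \<and> snd (hd r) \<noteq> None) PS))"
proof (induction PS)
  case Nil then show ?case by simp
next
  case (Cons p PS)
  have t: "tableau s (map (map fst) PS)" using Cons.prems by simp
  have v: "colouring s k (concat (rev PS))"
    using Cons.prems unfolding colouring_def by (simp add: sorted_wrt_append) blast
  have cross: "\<forall>q\<in>set (concat (rev PS)). \<forall>q'\<in>set p. compatible s q q'"
    using Cons.prems by (simp add: colouring_def sorted_wrt_append)
  have new: "snd (hd p) \<notin> snd ` hd ` {r \<in> set PS. r \<noteq> [] \<and> snd (hd r) \<noteq> None}"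
    if "p \<noteq> []" "snd (hd p) \<noteq> None"
  proof
    assume "snd (hd p) \<in> snd ` hd ` {r \<in> set PS. r \<noteq> [] \<and> snd (hd r) \<noteq> None}"
    then obtain r where r: "r \<in> set PS" "r \<noteq> []" "snd (hd r) = snd (hd p)" by auto
    have "hd r \<in> set r" using r(2) by simp
    then have "hd r \<in> set (concat (rev PS))" using r(1) by auto
    then have "compatible s (hd r) (hd p)" using cross that by auto
    then have le: "sle s (fst (hd r)) (fst (hd p))" using r that by (simp add: compatible_def)
    have "map fst r \<in> set (map (map fst) PS)" using r by auto
    then have "slt s (hd (map fst p)) (hd (map fst r))"
      using tableau_hd[of s "map fst p" "map (map fst) PS" "map fst r"] Cons.prems r by auto
    then show False using le that r by (simp add: hd_map not_slt[symmetric])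
  qed
  show ?case using Cons.IH[OF t v] new by auto
qed

lemma length_filter_conj: "length (filter (\<lambda>r. P r \<and> Q r) xs) \<le> length (filter P xs)"
  by (induction xs) auto

lemma length_filter_map_fst:
  "length (filter (\<lambda>r. r \<noteq> []) (map (map fst) Xs)) = length (filter (\<lambda>r. r \<noteq> []) Xs)"
  by (induction Xs) auto

lemma first_column_count:
  assumes t: "tableau s (map (map fst) PS)" and v: "colouring s k (concat (rev PS))"
  shows "length (filter (\<lambda>r. r \<noteq> [] \<and> snd (hd r) \<noteq> None) PS)
           \<le> length (filter (\<lambda>r. r \<noteq> []) (take k PS))"
proof -
  define L where "L = filter (\<lambda>r. r \<noteq> [] \<and> snd (hd r) \<noteq> None) PS"
  define C where "C = map (\<lambda>r. snd (hd r)) L"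
  have d: "distinct C" using first_column_colours_distinct[OF t v] unfolding C_def L_def .
  have sub: "set C \<subseteq> Some ` {..<k}"
  proof
    fix c assume "c \<in> set C"
    then obtain r where r: "r \<in> set PS" "r \<noteq> []" "snd (hd r) \<noteq> None" "c = snd (hd r)"
      unfolding C_def L_def by auto
    have "hd r \<in> set r" using r(2) by simp
    then have "hd r \<in> set (concat (rev PS))" using r(1) by auto
    then have "\<forall>m. snd (hd r) = Some m \<longrightarrow> m < k" using v unfolding colouring_def by blast
    then show "c \<in> Some ` {..<k}" using r(3,4) by auto
  qed
  have "length C = card (set C)" using distinct_card[OF d] by simp
  also have "\<dots> \<le> card (Some ` {..<k})" by (rule card_mono[OF _ sub]) simp
  also have "\<dots> = k" by (simp add: card_image)
  finally have lk: "length L \<le> k" unfolding C_def by simp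
  have lh: "length L \<le> length (filter (\<lambda>r. r \<noteq> []) PS)" unfolding L_def by (rule length_filter_conj)
  have "length (filter (\<lambda>r. r \<noteq> []) (take k (map (map fst) PS)))
        = min k (length (filter (\<lambda>r. r \<noteq> []) (map (map fst) PS)))"
    using nonempty_rows_take[OF t] .
  then have "length (filter (\<lambda>r. r \<noteq> []) (take k PS)) = min k (length (filter (\<lambda>r. r \<noteq> []) PS))"
    unfolding take_map length_filter_map_fst .
  then show ?thesis using lk lh unfolding L_def by simp
qed

lemma colouring_bound_columns:
  "\<forall>r\<in>set PS. length r \<le> N \<Longrightarrow> tableau s (map (map fst) PS) \<Longrightarrow> colouring s k (concat (rev PS)) \<Longrightarrow>
   sum_list (map ncol PS) \<le> sum_list (take k (map length PS))"
proof (induction N arbitrary: PS)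
  case 0
  then have "\<forall>r\<in>set PS. r = []" by auto
  then have "\<forall>n\<in>set (map ncol PS). n = 0" by auto
  then have z: "sum_list (map ncol PS) = 0" by (simp only: sum_list_eq_0_iff)
  show ?case unfolding z by simp
next
  case (Suc N)
  have a: "\<forall>r\<in>set (map tl PS). length r \<le> N" using Suc.prems(1) by auto
  have b: "tableau s (map (map fst) (map tl PS))"
    using tableau_tl[OF Suc.prems(2)] by (simp add: map_tl comp_def)
  have c: "colouring s k (concat (rev (map tl PS)))" using colouring_tl_rows Suc.prems(3) by blast
  have ih: "sum_list (map ncol (map tl PS)) \<le> sum_list (take k (map length (map tl PS)))"
    using Suc.IH[OF a b c] .
  show ?case
    using ih ncol_tl_rows[of PS] length_tl_rows[of k PS] first_column_count[OF Suc.prems(2,3)]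
    by linarith
qed

lemma tableau_colouring_bound:
  assumes t: "tableau s T" and m: "map fst ps = reading_word T" and v: "colouring s k ps"
  shows "ncol ps \<le> sum_list (take k (map length T))"
proof -
  from split_rows[of ps T] m obtain PS where PS: "ps = concat (rev PS)" "map (map fst) PS = T"
    by (auto simp: reading_word_def)
  have "\<forall>r\<in>set PS. length r \<le> sum_list (map length PS)"
    by (simp add: member_le_sum_list)
  moreover have "tableau s (map (map fst) PS)" using t PS(2) by simp
  moreover have "colouring s k (concat (rev PS))" using v PS(1) by simp
  ultimately have "sum_list (map ncol PS) \<le> sum_list (take k (map length PS))"
    using colouring_bound_columns by blast
  moreover have "map length T = map length PS" unfolding PS(2)[symmetric] by simp
  moreover have "ncol ps = sum_list (map ncol PS)" unfolding PS(1) by (rule ncol_rows)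
  ultimately show ?thesis by simp
qed

(* Greene's theorem in the form needed here: the sum of the first k row lengths of the insertion
   tableau of u is attained by a k-colouring of u ... *)
lemma rsk_colouring_exists:
  obtains ps where "map fst ps = u" "colouring s k ps"
    "ncol ps = sum_list (take k (map length (rsk (slt s) u)))"
proof -
  let ?T = "rsk (slt s) u"
  have equiv: "knuth_equiv s (reading_word ?T) u" and rows: "\<forall>r\<in>set ?T. sorted_wrt (sle s) r"
    using knuth_rsk knuth_equiv_sym by blast+
  from row_colouring_props[OF rows, of k 0]
  have c: "map fst (row_colouring k 0 ?T) = reading_word ?T" "colouring s k (row_colouring k 0 ?T)"
    and n: "ncol (row_colouring k 0 ?T) = sum_list (take k (map length ?T))"
    by simp_all
  obtain ps where "map fst ps = u" "colouring s k ps" "ncol ps = ncol (row_colouring k 0 ?T)"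
    using knuth_equiv_recolour[OF equiv c] .
  with n that[of ps] show ?thesis by simp
qed

lemma rsk_colouring_bound:
  assumes "map fst ps = u" "colouring s k ps"
  shows "ncol ps \<le> sum_list (take k (map length (rsk (slt s) u)))"
proof -
  obtain ps' where "map fst ps' = reading_word (rsk (slt s) u)" "colouring s k ps'"
    "ncol ps' = ncol ps"
    using knuth_equiv_recolour[OF conjunct1[OF knuth_rsk] assms] .
  moreover note tableau_colouring_bound[OF rsk_tableau calculation(1,2)]
  ultimately show ?thesis by simp
qed

lemma colouring_transfer:
  assumes len: "length u' = length u"
    and weak: "\<forall>i j. i < j \<longrightarrow> j < length u \<longrightarrow> sle s (u!i) (u!j) \<longrightarrow> sle s' (u'!i) (u'!j)"
    and ps: "map fst ps = u" "colouring s k ps"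
  shows "colouring s' k (zip u' (map snd ps))"
proof -
  let ?ps' = "zip u' (map snd ps)"
  have lp: "length ps = length u" using ps(1) by (metis length_map)
  have nth': "\<And>i. i < length u \<Longrightarrow> ?ps' ! i = (u' ! i, snd (ps ! i))" using len lp by simp
  have nth: "\<And>i. i < length u \<Longrightarrow> fst (ps ! i) = u ! i" using ps(1) lp by (metis nth_map)
  have "set (map snd ?ps') = set (map snd ps)" using len lp by simp
  then have "snd ` set ?ps' = snd ` set ps" by simp
  then have "\<forall>p\<in>set ?ps'. \<forall>m. snd p = Some m \<longrightarrow> m < k"
    using ps(2) unfolding colouring_def by (metis imageE imageI)
  moreover have "sorted_wrt (compatible s') ?ps'"
    unfolding sorted_wrt_iff_nth_less
  proof (intro allI impI)
    fix i j assume ij: "i < j" "j < length ?ps'"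
    have "compatible s (ps ! i) (ps ! j)"
      using ps(2) ij len lp unfolding colouring_def sorted_wrt_iff_nth_less by auto
    moreover have "j < length u" using ij len lp by simp
    ultimately show "compatible s' (?ps' ! i) (?ps' ! j)"
      using ij(1) nth'[of i] nth'[of j] nth[of i] nth[of j] weak[rule_format, of i j]
      by (auto simp: compatible_def)
  qed
  ultimately show ?thesis by (simp add: colouring_def)
qed

lemma greene_mono:
  assumes len: "length u' = length u"
    and weak: "\<forall>i j. i < j \<longrightarrow> j < length u \<longrightarrow> sle s (u!i) (u!j) \<longrightarrow> sle s' (u'!i) (u'!j)"
  shows "sum_list (take k (map length (rsk (slt s) u)))
           \<le> sum_list (take k (map length (rsk (slt s') u')))"
proof -
  obtain ps where ps: "map fst ps = u" "colouring s k ps"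
    "ncol ps = sum_list (take k (map length (rsk (slt s) u)))"
    by (rule rsk_colouring_exists)
  let ?ps' = "zip u' (map snd ps)"
  have "length ps = length u" using ps(1) by (metis length_map)
  then have "map fst ?ps' = u'" "map snd ?ps' = map snd ps" using len by simp_all
  moreover have "colouring s' k ?ps'" using colouring_transfer[OF len weak ps(1,2)] .
  ultimately show ?thesis using rsk_colouring_bound[of ?ps' u' s' k] ncol_eq_snd[of ?ps' ps] ps(3)
    by simp
qed

lemma embed_in_nat:
  fixes S :: "'a set" and r :: "'a \<Rightarrow> 'a \<Rightarrow> bool" and st :: "'a \<Rightarrow> bool"
  assumes fin: "finite S" and irr: "\<forall>a\<in>S. \<not> r a a"
    and tr: "\<forall>a\<in>S. \<forall>b\<in>S. \<forall>c\<in>S. r a b \<longrightarrow> r b c \<longrightarrow> r a c"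
    and tot: "\<forall>a\<in>S. \<forall>b\<in>S. a \<noteq> b \<longrightarrow> r a b \<or> r b a"
  shows "\<exists>f s. \<forall>a\<in>S. \<forall>b\<in>S. (slt s (f a) (f b) = (r a b \<or> (a = b \<and> \<not> st a))) \<and>
                              (sle s (f a) (f b) = (r a b \<or> (a = b \<and> st a)))"
proof -
  define f where "f a = card {c\<in>S. r c a}" for a
  have mono: "f a < f b" if "a \<in> S" "b \<in> S" "r a b" for a b
  proof -
    have "{c\<in>S. r c a} \<subset> {c\<in>S. r c b}"
    proof
      show "{c\<in>S. r c a} \<subseteq> {c\<in>S. r c b}" using tr that by blast
      show "{c\<in>S. r c a} \<noteq> {c\<in>S. r c b}" using that irr by blast
    qed
    then show ?thesis unfolding f_def by (rule psubset_card_mono[rotated]) (simp add: fin)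
  qed
  have iff: "r a b \<longleftrightarrow> f a < f b" if "a \<in> S" "b \<in> S" for a b
  proof
    assume "r a b" then show "f a < f b" using mono that by blast
  next
    assume h: "f a < f b"
    show "r a b"
    proof (rule ccontr)
      assume "\<not> r a b"
      moreover have "a \<noteq> b" using h by auto
      ultimately have "r b a" using tot that by blast
      then show False using mono[of b a] that h by simp
    qed
  qed
  have inj: "f a = f b \<Longrightarrow> a = b" if "a \<in> S" "b \<in> S" for a b
    using iff[of a b] iff[of b a] that tot by force
  define s where "s n = (\<exists>a\<in>S. f a = n \<and> st a)" for n
  have ss: "s (f a) = st a" if "a \<in> S" for a using inj that unfolding s_def by blast
  show ?thesis
  proof (intro exI ballI conjI)
    fix a b assume ab: "a \<in> S" "b \<in> S"
    show "slt s (f a) (f b) = (r a b \<or> (a = b \<and> \<not> st a))"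
      unfolding slt_def using iff[OF ab] inj[OF ab] ss[OF ab(1)] by auto
    show "sle s (f a) (f b) = (r a b \<or> (a = b \<and> st a))"
      unfolding sle_def using iff[OF ab] inj[OF ab] ss[OF ab(1)] by auto
  qed
qed

lemma row_ins_map:
  assumes "\<forall>a\<in>S. \<forall>b\<in>S. bump a b = bump' (f a) (f b)" "x \<in> S" "set r \<subseteq> S"
  shows "row_ins bump' (f x) (map f r) = map_prod (map_option f) (map f) (row_ins bump x r)
     \<and> (\<forall>y. fst (row_ins bump x r) = Some y \<longrightarrow> y \<in> S) \<and> set (snd (row_ins bump x r)) \<subseteq> S"
  using assms(3)
proof (induction r)
  case Nil then show ?case using assms(2) by simp
next
  case (Cons e es)
  have b: "bump' (f x) (f e) = bump x e" using assms(1,2) Cons.prems by simp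
  show ?case using Cons b assms(2) by (auto split: prod.splits)
qed

lemma tab_ins_map:
  assumes "\<forall>a\<in>S. \<forall>b\<in>S. bump a b = bump' (f a) (f b)"
  shows "x \<in> S \<Longrightarrow> \<forall>r\<in>set T. set r \<subseteq> S \<Longrightarrow>
    tab_ins bump' (f x) (map (map f) T) = map (map f) (tab_ins bump x T) \<and>
    (\<forall>r\<in>set (tab_ins bump x T). set r \<subseteq> S)"
proof (induction T arbitrary: x)
  case Nil then show ?case by simp
next
  case (Cons r rs)
  have R: "row_ins bump' (f x) (map f r) = map_prod (map_option f) (map f) (row_ins bump x r)"
     "\<forall>y. fst (row_ins bump x r) = Some y \<longrightarrow> y \<in> S" "set (snd (row_ins bump x r)) \<subseteq> S"
    using row_ins_map[where S=S and bump=bump and bump'=bump' and f=f and x=x and r=r,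
                      OF assms Cons.prems(1)] Cons.prems(2)
    by auto
  show ?case
  proof (cases "row_ins bump x r")
    case (Pair c r')
    show ?thesis
    proof (cases c)
      case None then show ?thesis using R Pair Cons.prems by simp
    next
      case (Some y)
      then have "y \<in> S" using R Pair by simp
      then show ?thesis using R Pair Some Cons.prems Cons.IH[of y] by simp
    qed
  qed
qed

lemma rsk_map:
  assumes "\<forall>a\<in>S. \<forall>b\<in>S. bump a b = bump' (f a) (f b)"
  shows "set w \<subseteq> S \<Longrightarrow>
    rsk bump' (map f w) = map (map f) (rsk bump w) \<and> (\<forall>r\<in>set (rsk bump w). set r \<subseteq> S)"
proof (induction w rule: rev_induct)
  case Nil then show ?case by (simp add: rsk_def)
next
  case (snoc x w)
  then have ih: "rsk bump' (map f w) = map (map f) (rsk bump w)"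
      "\<forall>r\<in>set (rsk bump w). set r \<subseteq> S" "x \<in> S"
    by auto
  show ?case
    using tab_ins_map[where S=S and bump=bump and bump'=bump' and f=f and x=x and T="rsk bump w",
                      OF assms ih(3,2)] ih(1)
    by (simp add: rsk_def)
qed

(* weakly_before P st a b: a may stand left of b in a row of an insertion tableau, i.e. a <_P b,
   or a = b is a strict letter (st marks the letters that do not bump an equal letter). *)
definition weakly_before :: "'a rel \<Rightarrow> ('a \<Rightarrow> bool) \<Rightarrow> 'a \<Rightarrow> 'a \<Rightarrow> bool" where
  "weakly_before P st a b \<longleftrightarrow> ((a, b) \<in> P \<and> a \<noteq> b) \<or> (a = b \<and> st a)"

lemma phi_standardise:
  fixes P :: "'a rel" and st :: "'a \<Rightarrow> bool" and w :: "'a list"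
  assumes lin: "linear_order_on S P" and w: "set w \<subseteq> S"
  obtains f s where "phi P st w = map length (rsk (slt s) (map f w))"
    "\<And>a b. a \<in> set w \<Longrightarrow> b \<in> set w \<Longrightarrow> sle s (f a) (f b) \<longleftrightarrow> weakly_before P st a b"
proof -
  define r where "r a b \<longleftrightarrow> (a, b) \<in> P \<and> a \<noteq> b" for a b
  have refl: "refl_on S P" and "trans P" "antisym P" "total_on S P"
    using lin unfolding linear_order_on_def partial_order_on_def preorder_on_def by blast+
  have irr: "\<forall>a\<in>set w. \<not> r a a" unfolding r_def by simp
  have tr: "\<forall>a\<in>set w. \<forall>b\<in>set w. \<forall>c\<in>set w. r a b \<longrightarrow> r b c \<longrightarrow> r a c"
    using \<open>trans P\<close> \<open>antisym P\<close> unfolding r_def trans_def antisym_def by blast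
  have tot: "\<forall>a\<in>set w. \<forall>b\<in>set w. a \<noteq> b \<longrightarrow> r a b \<or> r b a"
    using \<open>total_on S P\<close> w unfolding r_def total_on_def by blast
  obtain f s where fs: "\<forall>a\<in>set w. \<forall>b\<in>set w.
      (slt s (f a) (f b) = (r a b \<or> (a = b \<and> \<not> st a))) \<and>
      (sle s (f a) (f b) = (r a b \<or> (a = b \<and> st a)))"
    using embed_in_nat[OF finite_set irr tr tot, of st] by blast
  have "(a, a) \<in> P" if "a \<in> set w" for a using refl w that by (meson refl_onD subsetD)
  then have "\<forall>a\<in>set w. \<forall>b\<in>set w. bump_of P st a b = slt s (f a) (f b)"
    using fs unfolding bump_of_def r_def by auto
  from conjunct1[OF rsk_map[where bump = "bump_of P st" and f = f, OF this subset_refl]]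
  have "phi P st w = map length (rsk (slt s) (map f w))" by (simp add: phi_def comp_def)
  moreover have "sle s (f a) (f b) \<longleftrightarrow> weakly_before P st a b" if "a \<in> set w" "b \<in> set w" for a b
    using fs that unfolding r_def weakly_before_def by blast
  ultimately show ?thesis by (rule that)
qed

lemma phi_partial_sums_mono:
  fixes P :: "'a rel" and P' :: "'b rel" and g :: "'a \<Rightarrow> 'b"
  assumes lin: "linear_order_on S P" and w: "set w \<subseteq> S"
    and lin': "linear_order_on S' P'" and w': "g ` set w \<subseteq> S'"
    and weak: "\<And>a b. a \<in> set w \<Longrightarrow> b \<in> set w \<Longrightarrow> weakly_before P st a b \<Longrightarrow>
                   weakly_before P' st' (g a) (g b)"
  shows "sum_list (take k (phi P st w)) \<le> sum_list (take k (phi P' st' (map g w)))"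
proof -
  obtain f s where F: "phi P st w = map length (rsk (slt s) (map f w))"
    and f: "\<And>a b. a \<in> set w \<Longrightarrow> b \<in> set w \<Longrightarrow> sle s (f a) (f b) \<longleftrightarrow> weakly_before P st a b"
    by (rule phi_standardise[OF lin w, of st]) blast
  have w'': "set (map g w) \<subseteq> S'" using w' by simp
  obtain f' s' where F': "phi P' st' (map g w) = map length (rsk (slt s') (map f' (map g w)))"
    and f': "\<And>a b. a \<in> set (map g w) \<Longrightarrow> b \<in> set (map g w) \<Longrightarrow>
                sle s' (f' a) (f' b) \<longleftrightarrow> weakly_before P' st' a b"
    by (rule phi_standardise[OF lin' w'', of st']) blast
  have "\<forall>i j. i < j \<longrightarrow> j < length (map f w) \<longrightarrow> sle s (map f w ! i) (map f w ! j) \<longrightarrow>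
      sle s' (map f' (map g w) ! i) (map f' (map g w) ! j)"
  proof (intro allI impI)
    fix i j assume ij: "i < j" "j < length (map f w)" and le: "sle s (map f w ! i) (map f w ! j)"
    have ws: "w ! i \<in> set w" "w ! j \<in> set w" using ij by auto
    then have "weakly_before P st (w ! i) (w ! j)" using f le ij by auto
    then have "weakly_before P' st' (g (w ! i)) (g (w ! j))" using weak ws by blast
    moreover have "g (w ! i) \<in> set (map g w)" "g (w ! j) \<in> set (map g w)" using ws by auto
    ultimately show "sle s' (map f' (map g w) ! i) (map f' (map g w) ! j)" using f' ij by auto
  qed
  from greene_mono[OF _ this, of k] show ?thesis unfolding F F' by simp
qed

locale amalgamation =
  fixes A :: "letter set" and p :: "letter rel" and I :: "letter set"
  assumes lin: "linear_order_on A p" and interval: "interval_wrt A p I" and nonempty: "I \<noteq> {}"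
begin

lemma p_refl: "a \<in> A \<Longrightarrow> (a, a) \<in> p"
  using lin unfolding linear_order_on_def partial_order_on_def preorder_on_def refl_on_def by blast

lemma p_trans: "(a, b) \<in> p \<Longrightarrow> (b, c) \<in> p \<Longrightarrow> (a, c) \<in> p"
  using lin unfolding linear_order_on_def partial_order_on_def preorder_on_def trans_def by blast

lemma p_antisym: "(a, b) \<in> p \<Longrightarrow> (b, a) \<in> p \<Longrightarrow> a = b"
  using lin unfolding linear_order_on_def partial_order_on_def antisym_def by blast

lemma p_total: "a \<in> A \<Longrightarrow> b \<in> A \<Longrightarrow> a \<noteq> b \<Longrightarrow> (a, b) \<in> p \<or> (b, a) \<in> p"
  using lin unfolding linear_order_on_def total_on_def by blast

lemma I_subset: "I \<subseteq> A"
  using interval unfolding interval_wrt_def by blast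

lemma I_convex: "a1 \<in> I \<Longrightarrow> a2 \<in> I \<Longrightarrow> a \<in> A \<Longrightarrow> (a1, a) \<in> p \<Longrightarrow> (a, a2) \<in> p \<Longrightarrow> a \<in> I"
  using interval unfolding interval_wrt_def by blast

abbreviation Q :: "letter option rel" where
  "Q \<equiv> amalg_order A p I"

lemma Q_iff:
  "(x, y) \<in> Q \<longleftrightarrow>
     (\<exists>a b. x = Some a \<and> y = Some b \<and> a \<in> A - I \<and> b \<in> A - I \<and> (a, b) \<in> p) \<or>
     (x = None \<and> y = None) \<or>
     (\<exists>b. x = None \<and> y = Some b \<and> b \<in> A - I \<and> (\<exists>a\<in>I. (a, b) \<in> p)) \<or>
     (\<exists>a. x = Some a \<and> y = None \<and> a \<in> A - I \<and> (\<exists>b\<in>I. (a, b) \<in> p))"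
  unfolding amalg_order_def by blast

lemma Q_subset: "Q \<subseteq> amalg_alph A I \<times> amalg_alph A I"
  unfolding amalg_alph_def amalg_order_def by blast

lemma Q_refl_on: "refl_on (amalg_alph A I) Q"
  unfolding refl_on_def amalg_alph_def Q_iff using p_refl by auto

(* The only non-routine case of transitivity: letters on either side of the collapsed interval. *)
lemma Q_trans: "trans Q"
proof (rule transI)
  fix x y z assume xy: "(x, y) \<in> Q" and yz: "(y, z) \<in> Q"
  show "(x, z) \<in> Q"
  proof (cases "\<exists>a c. x = Some a \<and> y = None \<and> z = Some c")
    case True
    then obtain a c i i' where ac: "x = Some a" "z = Some c" "a \<in> A - I" "c \<in> A - I"
      and i: "i \<in> I" "i' \<in> I" "(a, i) \<in> p" "(i', c) \<in> p"
      using xy yz by (auto simp: Q_iff)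
    have "(a, c) \<in> p"
    proof (rule ccontr)
      assume "(a, c) \<notin> p"
      then have "(c, a) \<in> p" using p_total p_refl ac by blast
      then have "(c, i) \<in> p" using i p_trans by blast
      then show False using I_convex[of i' i c] i ac by blast
    qed
    then show ?thesis using ac by (auto simp: Q_iff)
  next
    case False
    then show ?thesis
      using xy yz by (cases x; cases y; cases z) (auto simp: Q_iff, (blast intro: p_trans)+)
  qed
qed

lemma Q_antisym: "antisym Q"
proof (rule antisymI)
  fix x y assume xy: "(x, y) \<in> Q" and yx: "(y, x) \<in> Q"
  have no_straddle: False if "(Some a, None) \<in> Q" "(None, Some a) \<in> Q" for a
    using that I_convex by (auto simp: Q_iff)
  show "x = y"
    using xy yx no_straddle by (cases x; cases y) (auto simp: Q_iff intro: p_antisym)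
qed

lemma Q_total: "total_on (amalg_alph A I) Q"
  unfolding total_on_def
proof (intro ballI impI)
  fix x y assume x: "x \<in> amalg_alph A I" and y: "y \<in> amalg_alph A I" and "x \<noteq> y"
  obtain i where i: "i \<in> I" "i \<in> A" using nonempty I_subset by blast
  have around: "(a, i) \<in> p \<or> (i, a) \<in> p" if "a \<in> A - I" for a
    using p_total[of a i] i that by auto
  show "(x, y) \<in> Q \<or> (y, x) \<in> Q"
  proof (cases x; cases y)
    fix a b assume "x = Some a" "y = Some b"
    then show ?thesis
      using x y \<open>x \<noteq> y\<close> p_total[of a b] unfolding amalg_alph_def by (auto simp: Q_iff)
  next
    fix a assume "x = Some a" "y = None"
    then show ?thesis using x around[of a] i unfolding amalg_alph_def by (auto simp: Q_iff)
  next
    fix b assume "x = None" "y = Some b"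
    then show ?thesis using y around[of b] i unfolding amalg_alph_def by (auto simp: Q_iff)
  qed (use \<open>x \<noteq> y\<close> in simp)
qed

lemma amalg_order_linear: "linear_order_on (amalg_alph A I) Q"
  unfolding linear_order_on_def partial_order_on_def preorder_on_def
  using Q_subset Q_refl_on Q_trans Q_antisym Q_total by blast

definition collapse :: "letter \<Rightarrow> letter option" where
  "collapse a = (if a \<in> I then None else Some a)"

lemma collapse_alph: "a \<in> A \<Longrightarrow> collapse a \<in> amalg_alph A I"
  unfolding collapse_def amalg_alph_def by auto

lemma amalg_word_collapse: "amalg_word I w = map collapse w"
  unfolding amalg_word_def collapse_def by simp

(* Collapsing preserves weak precedence; since z is declared strict, two letters of I in
   increasing order become two copies of z that may still share a row. *)
lemma collapse_weakly_before:
  assumes "a \<in> A" "b \<in> A" "weakly_before p is_X a b"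
  shows "weakly_before Q amalg_strict (collapse a) (collapse b)"
  using assms unfolding collapse_def weakly_before_def by (auto simp: Q_iff)

end

lemma sum_lam: "(\<Sum>i=1..k. lam sh i) = sum_list (take k sh)"
proof (induction k)
  case 0 then show ?case by simp
next
  case (Suc k)
  have "(\<Sum>i=1..Suc k. lam sh i) = (\<Sum>i=1..k. lam sh i) + lam sh (Suc k)" by simp
  also have "\<dots> = sum_list (take k sh) + lam sh (Suc k)" using Suc by simp
  also have "\<dots> = sum_list (take (Suc k) sh)"
    by (cases "k < length sh") (auto simp: lam_def take_Suc_conv_app_nth)
  finally show ?case .
qed

theorem lemma2:
  fixes Gset :: "real set" and p :: "letter rel" and I :: "letter set"
    and w :: "letter list" and k :: nat
  assumes "real_interval Gset"
    and "admissible Gset p"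
    and "interval_wrt (alph Gset) p I"
    and "I \<noteq> {}"
    and "set w \<subseteq> alph Gset"
    and "1 \<le> k"
  shows "(\<Sum>i=1..k. lam (phi p is_X w) i)
         \<le> (\<Sum>i=1..k. lam (phi (amalg_order (alph Gset) p I) amalg_strict (amalg_word I w)) i)"
proof -
  have lin: "linear_order_on (alph Gset) p"
    using assms(2) unfolding admissible_def by blast
  interpret amalgamation "alph Gset" p I
    using lin assms(3,4) by unfold_locales
  have "sum_list (take k (phi p is_X w))
        \<le> sum_list (take k (phi (amalg_order (alph Gset) p I) amalg_strict (map collapse w)))"
    using phi_partial_sums_mono[OF lin assms(5) amalg_order_linear] assms(5)
      collapse_alph collapse_weakly_before by blast
  then show ?thesis unfolding sum_lam amalg_word_collapse .
qed

end
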